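(* (a) There exist compatible t-pairs $\tau_1^1,\tau_2^1$ and a union $\tau^1$ of them such that $\operatorname{typ}_u(\tau_1^1)=\operatorname{typ}_u(\tau_2^1)=\operatorname{typ}_u(\tau^1)=t_5$. (b) There exist compatible t-pairs $\tau_1^2,\tau_2^2$ and a union $\tau^2$ of them such that $\operatorname{typ}_u(\tau_1^2)=\operatorname{typ}_u(\tau_2^2)=t_5$ and $\operatorname{typ}_u(\tau^2)=t_6$.
   Context: Let $\mathbb{N}=\{0,1,2,\dots\}$; for an integer $k\ge 2$ let $E_k=\{0,1,\dots,k-1\}$; let $\mathcal{P}(\mathbb{N})$ be the set of nonempty finite subsets of $\mathbb{N}$. Let $F$ be a nonempty set (of attribute names). A decision table $T\in\mathcal{M}_k(F)$ is a rectangular table with $n\ge 1$ columns labeled with attributes $f_1,\dots,f_n\in F$ (any two columns labeled with the same attribute are equal), whose rows are pairwise different tuples from $E_k^n$ (the set of rows may be empty), each row being labeled with a set of decisions from $\mathcal{P}(\mathbb{N})$. Write $At(T)=\{f_1,\dots,f_n\}$ and $\Delta(T)$ for the set of rows. For a word $\alpha=(f_{i_1},\delta_1)\cdots(f_{i_m},\delta_m)$ with $f_{i_j}\in At(T)$, $\delta_j\in E_k$, the subtable $T\alpha$ consists of the rows of $T$ having value $\delta_j$ in column $f_{i_j}$ for all $j$ ($T\lambda=T$ for the empty word $\lambda$). Operations on tables: (1) removal of a column from a table with at least two columns (if groups of equal rows appear, only the first row of each group, with its decision set, is kept); (2) changing of decisions: the decision sets attached to rows are replaced arbitrarily by sets from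 $\mathcal{P}(\mathbb{N})$; (3) permutation of columns: swap two columns together with their attribute labels; (4) duplication of columns: add a copy of a column (with its label) next to it. A set $\mathcal{C}\subseteq\mathcal{M}_k(F)$ is a closed class if every table obtained from a table of $\mathcal{C}$ by finitely many such operations belongs to $\mathcal{C}$. A decision tree over $\mathcal{M}_k(F)$ is a finite directed tree with a root (unique node with no entering edge) and at least two nodes such that the root and the edges leaving the root are unlabeled, each worker node (neither root nor terminal) is labeled with an attribute from $F$, each edge leaving a worker node is labeled with a number from $E_k$, and each terminal node is labeled with a number from $\mathbb{N}$. For a complete path $\xi$ (root to terminal node) whose worker nodes are labeled $f_{j_1},\dots,f_{j_m}$ in order, with the edges leaving them labeled $\delta_1,\dots,\delta_m$, put $\pi(\xi)=(f_{j_1},\delta_1)\cdots(f_{j_m},\delta_m)$, $\varphi(\xi)=f_{j_1}\cdots f_{j_m}$ (both empty if $m=0$), and let $\tau(\xi)$ be the label of its terminal node. A nondeterministic decision tree for $T$ is a decision tree $\Gamma$ whose worker-node attributes lie in $At(T)$, such that $\bigcup_{\xi}\Delta(T\pi(\xi))=\Delta(T)$ (union over complete paths), and for every row $r\in\Delta(T)$ and every complete path $\xi$ with $r\in\Delta(T\pi(\xi))$, $\tau(\xi)$ belongs to the decision set of $r$. A decision tree is deterministic if exactly one edge leaves the root and the edges leaving each worker node have pairwise different labels; a deterministic decision tree for $T$ is a deterministic decision tree that is a nondeterministic decision tree for $T$. A complexity measure over $\mathcal{M}_k(F)$ is any map $\psi:F^*\to\mathbb{N}$, where $F^*$ is the set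 of finite words over $F$ including the empty word $\lambda$. For a tree, $\psi(\Gamma)=\max_\xi\psi(\varphi(\xi))$ over complete paths. For $T$ with columns labeled $f_1,\dots,f_n$: $\psi^i(T)=\psi(f_1\cdots f_n)$, $\psi^d(T)$ is the minimum complexity of a deterministic decision tree for $T$, $\psi^a(T)$ the minimum complexity of a nondeterministic decision tree for $T$. A t-pair $(\mathcal{C},\psi)$ consists of a closed class $\mathcal{C}\subseteq\mathcal{M}_k(F)$ and a complexity measure $\psi$ over $\mathcal{M}_k(F)$. For $b,c\in\{i,d,a\}$ define the partial function $\mathcal{U}^{bc}_{\mathcal{C}\psi}(n)=\max\{\psi^b(T):T\in\mathcal{C},\psi^c(T)\le n\}$ (defined iff this set is nonempty and finite). For a partial function $g:\mathbb{N}\to\mathbb{N}$ with domain $\mathrm{Dom}(g)$, let $\mathrm{Dom}^+(g)=\{n\in\mathrm{Dom}(g):g(n)\ge n\}$, $\mathrm{Dom}^-(g)=\{n\in\mathrm{Dom}(g):g(n)\le n\}$. Its type $\operatorname{typ}(g)$ is: $\alpha$ if $\mathrm{Dom}(g)$ is infinite and $g$ is bounded above; $\beta$ if $\mathrm{Dom}(g)$ is infinite, $\mathrm{Dom}^+(g)$ is finite and $g$ is unbounded above; $\gamma$ if $\mathrm{Dom}^+(g)$ and $\mathrm{Dom}^-(g)$ are both infinite; $\delta$ if $\mathrm{Dom}(g)$ is infinite and $\mathrm{Dom}^-(g)$ is finite; $\epsilon$ if $\mathrm{Dom}(g)$ is finite. The upper type $\operatorname{typ}_u(\mathcal{C},\psi)$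 is the $3\times 3$ table with rows and columns indexed by $i,d,a$ (in this order) whose entry in row $b$, column $c$ is $\operatorname{typ}(\mathcal{U}^{bc}_{\mathcal{C}\psi})$. Row by row (rows $i,d,a$; entries in columns $i,d,a$): $t_5$: $i:(\gamma,\epsilon,\epsilon)$; $d:(\gamma,\gamma,\gamma)$; $a:(\gamma,\gamma,\gamma)$. $t_6$: $i:(\gamma,\epsilon,\epsilon)$; $d:(\gamma,\gamma,\delta)$; $a:(\gamma,\gamma,\gamma)$. Union: t-pairs $\tau_1=(\mathcal{C}_1,\psi_1)$ with $\mathcal{C}_1\subseteq\mathcal{M}_{k_1}(F_1)$ and $\tau_2=(\mathcal{C}_2,\psi_2)$ with $\mathcal{C}_2\subseteq\mathcal{M}_{k_2}(F_2)$ are compatible if $F_1\cap F_2=\varnothing$ and $\psi_1(\lambda)=\psi_2(\lambda)$. A union of them is a t-pair $(\mathcal{C},\psi)$ with $\mathcal{C}=\mathcal{C}_1\cup\mathcal{C}_2\subseteq\mathcal{M}_{\max(k_1,k_2)}(F_1\cup F_2)$ and $\psi:(F_1\cup F_2)^*\to\mathbb{N}$ any map with $\psi(\alpha)=\psi_1(\alpha)$ for $\alpha\in F_1^*$, $\psi(\alpha)=\psi_2(\alpha)$ for $\alpha\in F_2^*$, and arbitrary values on words containing letters from both $F_1$ and $F_2$. *)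

theory Defs
  imports Main
begin

text \<open>A decision table: list of column attributes, set of rows (tuples as lists),
  and decision sets attached to rows (empty set outside the rows, for canonicity).\<close>

record 'f dtable =
  attrs :: "'f list"
  rows  :: "nat list set"
  dec   :: "nat list \<Rightarrow> nat set"

definition in_M :: "nat \<Rightarrow> 'f set \<Rightarrow> 'f dtable \<Rightarrow> bool" where
  "in_M k F T \<longleftrightarrow>
     length (attrs T) \<ge> 1 \<and> set (attrs T) \<subseteq> F \<and>
     (\<forall>r\<in>rows T. length r = length (attrs T) \<and> (\<forall>v\<in>set r. v < k)) \<and>
     (\<forall>r\<in>rows T. \<forall>i<length (attrs T). \<forall>j<length (attrs T).
          attrs T ! i = attrs T ! j \<longrightarrow> r ! i = r ! j) \<and>
     (\<forall>r\<in>rows T. dec T r \<noteq> {} \<and> finite (dec T r)) \<and>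
     (\<forall>r. r \<notin> rows T \<longrightarrow> dec T r = {})"

definition ldel :: "nat \<Rightarrow> 'a list \<Rightarrow> 'a list" where
  "ldel i xs = take i xs @ drop (Suc i) xs"

definition lswap :: "nat \<Rightarrow> nat \<Rightarrow> 'a list \<Rightarrow> 'a list" where
  "lswap i j xs = (xs[i := xs ! j])[j := xs ! i]"

definition ldup :: "nat \<Rightarrow> 'a list \<Rightarrow> 'a list" where
  "ldup i xs = take (Suc i) xs @ (xs ! i) # drop (Suc i) xs"

definition table_op :: "'f dtable \<Rightarrow> 'f dtable \<Rightarrow> bool" where
  "table_op T T' \<longleftrightarrow>
     \<comment> \<open>(1) removal of column i; of each group of rows that become equal one
         representative keeps its decision set\<close>
     (\<exists>i. length (attrs T) \<ge> 2 \<and> i < length (attrs T) \<and>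
          attrs T' = ldel i (attrs T) \<and> rows T' = ldel i ` rows T \<and>
          (\<forall>r'\<in>rows T'. \<exists>r\<in>rows T. ldel i r = r' \<and> dec T' r' = dec T r) \<and>
          (\<forall>r'. r' \<notin> rows T' \<longrightarrow> dec T' r' = {}))
   \<or> \<comment> \<open>(2) changing of decisions\<close>
     (attrs T' = attrs T \<and> rows T' = rows T \<and>
      (\<forall>r\<in>rows T'. dec T' r \<noteq> {} \<and> finite (dec T' r)) \<and>
      (\<forall>r. r \<notin> rows T' \<longrightarrow> dec T' r = {}))
   \<or> \<comment> \<open>(3) permutation (swap) of two columns\<close>
     (\<exists>i j. i < length (attrs T) \<and> j < length (attrs T) \<and>
          attrs T' = lswap i j (attrs T) \<and> rows T' = lswap i j ` rows T \<and>
          dec T' = (\<lambda>r'. dec T (lswap i j r')))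
   \<or> \<comment> \<open>(4) duplication of column i (the copy is placed right after it)\<close>
     (\<exists>i. i < length (attrs T) \<and>
          attrs T' = ldup i (attrs T) \<and> rows T' = ldup i ` rows T \<and>
          (\<forall>r\<in>rows T. dec T' (ldup i r) = dec T r) \<and>
          (\<forall>r'. r' \<notin> rows T' \<longrightarrow> dec T' r' = {}))"

definition closed_class :: "nat \<Rightarrow> 'f set \<Rightarrow> 'f dtable set \<Rightarrow> bool" where
  "closed_class k F C \<longleftrightarrow>
     C \<subseteq> {T. in_M k F T} \<and> (\<forall>T\<in>C. \<forall>T'. table_op\<^sup>*\<^sup>* T T' \<longrightarrow> T' \<in> C)"

text \<open>A decision tree is the list of
  subtrees hanging from the (unlabelled) root.\<close>

datatype 'f dnode = Term nat | Work 'f "(nat \<times> 'f dnode) list"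

fun wf_node :: "nat \<Rightarrow> 'f dnode \<Rightarrow> bool" where
  "wf_node k (Term a) = True"
| "wf_node k (Work f es) = (es \<noteq> [] \<and> (\<forall>e\<in>set es. fst e < k \<and> wf_node k (snd e)))"

fun det_node :: "'f dnode \<Rightarrow> bool" where
  "det_node (Term a) = True"
| "det_node (Work f es) = (distinct (map fst es) \<and> (\<forall>e\<in>set es. det_node (snd e)))"

fun node_attrs :: "'f dnode \<Rightarrow> 'f set" where
  "node_attrs (Term a) = {}"
| "node_attrs (Work f es) = insert f (\<Union>e\<in>set es. node_attrs (snd e))"

fun node_paths :: "'f dnode \<Rightarrow> (('f \<times> nat) list \<times> nat) list" where
  "node_paths (Term a) = [([], a)]"
| "node_paths (Work f es) =
     concat (map (\<lambda>e. map (\<lambda>p. ((f, fst e) # fst p, snd p)) (node_paths (snd e))) es)"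

type_synonym 'f dtree = "'f dnode list"

definition wf_tree :: "nat \<Rightarrow> 'f dtree \<Rightarrow> bool" where
  "wf_tree k \<Gamma> \<longleftrightarrow> \<Gamma> \<noteq> [] \<and> (\<forall>t\<in>set \<Gamma>. wf_node k t)"

definition tree_attrs :: "'f dtree \<Rightarrow> 'f set" where
  "tree_attrs \<Gamma> = (\<Union>t\<in>set \<Gamma>. node_attrs t)"

definition tree_paths :: "'f dtree \<Rightarrow> (('f \<times> nat) list \<times> nat) list" where
  "tree_paths \<Gamma> = concat (map node_paths \<Gamma>)"

definition is_det_tree :: "'f dtree \<Rightarrow> bool" where
  "is_det_tree \<Gamma> \<longleftrightarrow> length \<Gamma> = 1 \<and> (\<forall>t\<in>set \<Gamma>. det_node t)"

definition sub_rows :: "'f dtable \<Rightarrow> ('f \<times> nat) list \<Rightarrow> nat list set" where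
  "sub_rows T \<alpha> = {r \<in> rows T. \<forall>p\<in>set \<alpha>. \<forall>i<length (attrs T).
                        attrs T ! i = fst p \<longrightarrow> r ! i = snd p}"

definition ndt_for :: "nat \<Rightarrow> 'f dtable \<Rightarrow> 'f dtree \<Rightarrow> bool" where
  "ndt_for k T \<Gamma> \<longleftrightarrow> wf_tree k \<Gamma> \<and> tree_attrs \<Gamma> \<subseteq> set (attrs T) \<and>
     (\<Union>\<xi>\<in>set (tree_paths \<Gamma>). sub_rows T (fst \<xi>)) = rows T \<and>
     (\<forall>\<xi>\<in>set (tree_paths \<Gamma>). \<forall>r\<in>sub_rows T (fst \<xi>). snd \<xi> \<in> dec T r)"

definition dt_for :: "nat \<Rightarrow> 'f dtable \<Rightarrow> 'f dtree \<Rightarrow> bool" where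
  "dt_for k T \<Gamma> \<longleftrightarrow> is_det_tree \<Gamma> \<and> ndt_for k T \<Gamma>"

definition tree_cost :: "('f list \<Rightarrow> nat) \<Rightarrow> 'f dtree \<Rightarrow> nat" where
  "tree_cost \<psi> \<Gamma> = Max ((\<lambda>\<xi>. \<psi> (map fst (fst \<xi>))) ` set (tree_paths \<Gamma>))"

datatype idx = I | D | A

definition psi_i :: "('f list \<Rightarrow> nat) \<Rightarrow> 'f dtable \<Rightarrow> nat" where
  "psi_i \<psi> T = \<psi> (attrs T)"

definition psi_d :: "nat \<Rightarrow> ('f list \<Rightarrow> nat) \<Rightarrow> 'f dtable \<Rightarrow> nat" where
  "psi_d k \<psi> T = (LEAST m. \<exists>\<Gamma>. dt_for k T \<Gamma> \<and> tree_cost \<psi> \<Gamma> = m)"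

definition psi_a :: "nat \<Rightarrow> ('f list \<Rightarrow> nat) \<Rightarrow> 'f dtable \<Rightarrow> nat" where
  "psi_a k \<psi> T = (LEAST m. \<exists>\<Gamma>. ndt_for k T \<Gamma> \<and> tree_cost \<psi> \<Gamma> = m)"

fun psi_m :: "idx \<Rightarrow> nat \<Rightarrow> ('f list \<Rightarrow> nat) \<Rightarrow> 'f dtable \<Rightarrow> nat" where
  "psi_m I k \<psi> T = psi_i \<psi> T"
| "psi_m D k \<psi> T = psi_d k \<psi> T"
| "psi_m A k \<psi> T = psi_a k \<psi> T"

record 'f tpair =
  tk   :: nat
  tF   :: "'f set"
  tC   :: "'f dtable set"
  tpsi :: "'f list \<Rightarrow> nat"

definition is_tpair :: "'f tpair \<Rightarrow> bool" where
  "is_tpair \<tau> \<longleftrightarrow> tk \<tau> \<ge> 2 \<and> tF \<tau> \<noteq> {} \<and> closed_class (tk \<tau>) (tF \<tau>) (tC \<tau>)"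

definition U_fun :: "'f tpair \<Rightarrow> idx \<Rightarrow> idx \<Rightarrow> nat \<Rightarrow> nat option" where
  "U_fun \<tau> b c n =
     (let S = {psi_m b (tk \<tau>) (tpsi \<tau>) T | T. T \<in> tC \<tau> \<and> psi_m c (tk \<tau>) (tpsi \<tau>) T \<le> n}
      in if S \<noteq> {} \<and> finite S then Some (Max S) else None)"

datatype tp_type = Alpha | Beta | Gamma | Delta | Epsilon

definition pdom :: "(nat \<Rightarrow> nat option) \<Rightarrow> nat set" where
  "pdom g = {n. g n \<noteq> None}"

definition pdom_plus :: "(nat \<Rightarrow> nat option) \<Rightarrow> nat set" where
  "pdom_plus g = {n \<in> pdom g. the (g n) \<ge> n}"

definition pdom_minus :: "(nat \<Rightarrow> nat option) \<Rightarrow> nat set" where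
  "pdom_minus g = {n \<in> pdom g. the (g n) \<le> n}"

definition bounded_above :: "(nat \<Rightarrow> nat option) \<Rightarrow> bool" where
  "bounded_above g \<longleftrightarrow> (\<exists>M. \<forall>n\<in>pdom g. the (g n) \<le> M)"

fun has_typ :: "(nat \<Rightarrow> nat option) \<Rightarrow> tp_type \<Rightarrow> bool" where
  "has_typ g Alpha = (infinite (pdom g) \<and> bounded_above g)"
| "has_typ g Beta = (infinite (pdom g) \<and> finite (pdom_plus g) \<and> \<not> bounded_above g)"
| "has_typ g Gamma = (infinite (pdom_plus g) \<and> infinite (pdom_minus g))"
| "has_typ g Delta = (infinite (pdom g) \<and> finite (pdom_minus g))"
| "has_typ g Epsilon = finite (pdom g)"

definition upper_type_is :: "'f tpair \<Rightarrow> (idx \<Rightarrow> idx \<Rightarrow> tp_type) \<Rightarrow> bool" where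
  "upper_type_is \<tau> t \<longleftrightarrow> (\<forall>b c. has_typ (U_fun \<tau> b c) (t b c))"

fun t5 :: "idx \<Rightarrow> idx \<Rightarrow> tp_type" where
  "t5 I I = Gamma" | "t5 I D = Epsilon" | "t5 I A = Epsilon"
| "t5 D _ = Gamma"
| "t5 A _ = Gamma"

fun t6 :: "idx \<Rightarrow> idx \<Rightarrow> tp_type" where
  "t6 I I = Gamma" | "t6 I D = Epsilon" | "t6 I A = Epsilon"
| "t6 D I = Gamma" | "t6 D D = Gamma" | "t6 D A = Delta"
| "t6 A _ = Gamma"

definition compatible :: "'f tpair \<Rightarrow> 'f tpair \<Rightarrow> bool" where
  "compatible \<tau>1 \<tau>2 \<longleftrightarrow> tF \<tau>1 \<inter> tF \<tau>2 = {} \<and> tpsi \<tau>1 [] = tpsi \<tau>2 []"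

definition is_union :: "'f tpair \<Rightarrow> 'f tpair \<Rightarrow> 'f tpair \<Rightarrow> bool" where
  "is_union \<tau>1 \<tau>2 \<tau> \<longleftrightarrow> is_tpair \<tau> \<and>
     tk \<tau> = max (tk \<tau>1) (tk \<tau>2) \<and> tF \<tau> = tF \<tau>1 \<union> tF \<tau>2 \<and> tC \<tau> = tC \<tau>1 \<union> tC \<tau>2 \<and>
     (\<forall>\<alpha>\<in>lists (tF \<tau>1). tpsi \<tau> \<alpha> = tpsi \<tau>1 \<alpha>) \<and>
     (\<forall>\<alpha>\<in>lists (tF \<tau>2). tpsi \<tau> \<alpha> = tpsi \<tau>2 \<alpha>)"

end

theory Submission
  imports Defs
begin

text \<open>Attributes are natural numbers, grouped into blocks \<open>{3m, 3m+1, 3m+2}\<close>. For a set \<open>S\<close>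
  of block indices we take the class of all tables over \<open>E\<^sub>2\<close> whose attributes lie in a single
  block \<open>m \<in> S\<close>, and the complexity measure that charges \<open>0\<close> for the empty word, \<open>2m+1\<close> for a
  one-letter word and \<open>2m+4\<close> for a longer word whose first letter lies in block \<open>m\<close>. Every
  decision tree for a table of block \<open>m\<close> without a common decision has a nonempty path, so its
  three complexities lie in \<open>[2m+1, 2m+4]\<close>, while a table with a common decision has
  \<open>\<psi>\<^sup>d = \<psi>\<^sup>a = 0\<close>. A one-column table with two rows yields \<open>U\<^sup>b\<^sup>c(2m+1) = 2m+1\<close> whenever
  \<open>\<psi>\<^sup>b \<le> \<psi>\<^sup>c\<close>, one-row tables make \<open>U\<^sup>i\<^sup>d\<close> and \<open>U\<^sup>i\<^sup>a\<close> nowhere defined, and the table of the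
  three unit vectors has \<open>\<psi>\<^sup>a \<le> 2m+1 < 2m+4 \<le> \<psi>\<^sup>d\<close>. So \<open>U\<^sup>d\<^sup>a(n) > n\<close> for \<open>n = 2m+1\<close> with
  \<open>m \<in> S\<close>, and \<open>U\<^sup>d\<^sup>a(n) \<le> n\<close> for \<open>n = 2m+2\<close> with \<open>m \<notin> S\<close>: the type of \<open>U\<^sup>d\<^sup>a\<close> is \<open>\<gamma>\<close> if
  \<open>S\<close> is infinite and coinfinite and \<open>\<delta>\<close> if \<open>S = \<nat>\<close>. The union of the t-pairs for disjoint
  \<open>S\<^sub>1, S\<^sub>2\<close> is the t-pair for \<open>S\<^sub>1 \<union> S\<^sub>2\<close>; residues \<open>0, 1\<close> mod \<open>4\<close> give (a), even and odd
  numbers give (b).\<close>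

section \<open>Closure of well-formed tables under the table operations\<close>

lemma ldel_map: "ldel i (map f xs) = map f (ldel i xs)"
  by (simp add: ldel_def take_map drop_map)

lemma lswap_map: "i < length xs \<Longrightarrow> j < length xs \<Longrightarrow> lswap i j (map f xs) = map f (lswap i j xs)"
  by (simp add: lswap_def map_update)

lemma ldup_map: "i < length xs \<Longrightarrow> ldup i (map f xs) = map f (ldup i xs)"
  by (simp add: ldup_def take_map drop_map)

lemma ldel_conv_map_nth: "ldel i xs = map ((!) xs) (ldel i [0..<length xs])"
  using ldel_map[of i "(!) xs" "[0..<length xs]"] by (simp add: map_nth)

lemma lswap_conv_map_nth:
  "i < length xs \<Longrightarrow> j < length xs \<Longrightarrow> lswap i j xs = map ((!) xs) (lswap i j [0..<length xs])"
  using lswap_map[of i "[0..<length xs]" j "(!) xs"] by (simp add: map_nth)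

lemma ldup_conv_map_nth: "i < length xs \<Longrightarrow> ldup i xs = map ((!) xs) (ldup i [0..<length xs])"
  using ldup_map[of i "[0..<length xs]" "(!) xs"] by (simp add: map_nth)

lemma lswap_lswap: "i < length xs \<Longrightarrow> j < length xs \<Longrightarrow> lswap i j (lswap i j xs) = xs"
  by (rule nth_equalityI) (auto simp: lswap_def nth_list_update)

lemma set_lswap_upt: "i < n \<Longrightarrow> j < n \<Longrightarrow> set (lswap i j [0..<n]) \<subseteq> {..<n}"
  using set_update_subset_insert[of "[0..<n][i := j]" j i] set_update_subset_insert[of "[0..<n]" i j]
  by (auto simp: lswap_def)

lemma in_M_mono: "in_M k F T \<Longrightarrow> F \<subseteq> G \<Longrightarrow> in_M k G T"
  unfolding in_M_def by (elim conjE) (intro conjI; assumption | blast)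

lemma attrs_in_M: "in_M k F T \<Longrightarrow> attrs T \<noteq> [] \<and> set (attrs T) \<subseteq> F"
  unfolding in_M_def by (elim conjE) auto

lemma length_row_in_M: "in_M k F T \<Longrightarrow> r \<in> rows T \<Longrightarrow> length r = length (attrs T)"
  unfolding in_M_def by simp

lemma row_values_in_M: "in_M k F T \<Longrightarrow> r \<in> rows T \<Longrightarrow> set r \<subseteq> {..<k}"
  unfolding in_M_def by (elim conjE) auto

lemma row_consistent_in_M:
  assumes "in_M k F T" and "r \<in> rows T"
    and "i < length (attrs T)" and "j < length (attrs T)" and "attrs T ! i = attrs T ! j"
  shows "r ! i = r ! j"
  using assms unfolding in_M_def by (elim conjE) blast

lemma dec_in_M:
  assumes "in_M k F T"
  shows "r \<in> rows T \<Longrightarrow> dec T r \<noteq> {} \<and> finite (dec T r)" and "r \<notin> rows T \<Longrightarrow> dec T r = {}"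
  using assms unfolding in_M_def by simp_all

lemma in_M_distinct_attrsI:
  assumes "attrs T \<noteq> []" and "set (attrs T) \<subseteq> F" and "distinct (attrs T)"
    and "\<forall>r\<in>rows T. length r = length (attrs T) \<and> set r \<subseteq> {..<k}"
    and "\<forall>r\<in>rows T. dec T r \<noteq> {} \<and> finite (dec T r)" and "\<forall>r. r \<notin> rows T \<longrightarrow> dec T r = {}"
  shows "in_M k F T"
  unfolding in_M_def
proof (intro conjI)
  show "\<forall>r\<in>rows T. \<forall>i<length (attrs T). \<forall>j<length (attrs T). attrs T ! i = attrs T ! j \<longrightarrow> r ! i = r ! j"
    using nth_eq_iff_index_eq[OF assms(3)] by simp
qed (use assms in \<open>auto simp: Suc_le_eq\<close>)

text \<open>Removal, permutation and duplication of columns all transform every row \<open>r\<close> into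
  \<open>map ((!) r) ix\<close> for one fixed list \<open>ix\<close> of column indices.\<close>

lemma in_M_reindex:
  assumes M: "in_M k F T"
    and ix: "ix \<noteq> []" "set ix \<subseteq> {..<length (attrs T)}"
    and attrs: "attrs T' = map ((!) (attrs T)) ix"
    and rows: "rows T' = (\<lambda>r. map ((!) r) ix) ` rows T"
    and dec: "\<forall>r\<in>rows T'. dec T' r \<noteq> {} \<and> finite (dec T' r)" "\<forall>r. r \<notin> rows T' \<longrightarrow> dec T' r = {}"
  shows "in_M k F T'"
  unfolding in_M_def
proof (intro conjI)
  have ix_bound: "\<forall>i\<in>set ix. i < length (attrs T)" using ix(2) by blast
  have row: "length r = length (attrs T)" "\<forall>v\<in>set r. v < k"
    "\<forall>i<length (attrs T). \<forall>j<length (attrs T). attrs T ! i = attrs T ! j \<longrightarrow> r ! i = r ! j"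
    if "r \<in> rows T" for r
    using M that unfolding in_M_def by blast+
  show "1 \<le> length (attrs T')" using ix(1) attrs by (simp add: Suc_le_eq)
  show "set (attrs T') \<subseteq> F" using M ix_bound attrs unfolding in_M_def by auto
  show "\<forall>r\<in>rows T'. length r = length (attrs T') \<and> (\<forall>v\<in>set r. v < k)"
    using rows attrs ix_bound row by auto
  show "\<forall>r\<in>rows T'. \<forall>i<length (attrs T'). \<forall>j<length (attrs T').
          attrs T' ! i = attrs T' ! j \<longrightarrow> r ! i = r ! j"
    using rows attrs ix_bound row by auto
qed (use dec in blast)+

lemma in_M_remove_column:
  assumes M: "in_M k F T" and n: "2 \<le> length (attrs T)" and i: "i < length (attrs T)"
    and attrs: "attrs T' = ldel i (attrs T)" and rows: "rows T' = ldel i ` rows T"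
    and dec: "\<forall>r'\<in>rows T'. \<exists>r\<in>rows T. ldel i r = r' \<and> dec T' r' = dec T r"
      "\<forall>r'. r' \<notin> rows T' \<longrightarrow> dec T' r' = {}"
  shows "in_M k F T'"
proof (rule in_M_reindex[OF M, of "ldel i [0..<length (attrs T)]"])
  show "ldel i [0..<length (attrs T)] \<noteq> []" "set (ldel i [0..<length (attrs T)]) \<subseteq> {..<length (attrs T)}"
    using n i by (auto simp: ldel_def dest: in_set_takeD in_set_dropD)
  show "attrs T' = map ((!) (attrs T)) (ldel i [0..<length (attrs T)])"
    using attrs ldel_conv_map_nth[of i "attrs T"] by simp
  show "rows T' = (\<lambda>r. map ((!) r) (ldel i [0..<length (attrs T)])) ` rows T"
    unfolding rows
  proof (rule image_cong[OF refl])
    fix r assume "r \<in> rows T"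
    then show "ldel i r = map ((!) r) (ldel i [0..<length (attrs T)])"
      using ldel_conv_map_nth[of i r] length_row_in_M[OF M] by simp
  qed
  show "\<forall>r'\<in>rows T'. dec T' r' \<noteq> {} \<and> finite (dec T' r')"
    using dec(1) dec_in_M(1)[OF M] by metis
qed (use dec(2) in blast)

lemma in_M_swap_columns:
  assumes M: "in_M k F T" and i: "i < length (attrs T)" and j: "j < length (attrs T)"
    and attrs: "attrs T' = lswap i j (attrs T)" and rows: "rows T' = lswap i j ` rows T"
    and dec: "dec T' = (\<lambda>r'. dec T (lswap i j r'))"
  shows "in_M k F T'"
proof (rule in_M_reindex[OF M, of "lswap i j [0..<length (attrs T)]"])
  have swapped_in_rows: "lswap i j r' \<in> rows T \<longleftrightarrow> r' \<in> rows T'" for r'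
  proof
    assume r': "lswap i j r' \<in> rows T"
    then have "length r' = length (attrs T)" using length_row_in_M[OF M r'] by (simp add: lswap_def)
    then have "r' = lswap i j (lswap i j r')" using lswap_lswap[of i r' j] i j by simp
    then show "r' \<in> rows T'" unfolding rows using r' by (rule image_eqI)
  next
    assume "r' \<in> rows T'"
    then obtain r where r: "r \<in> rows T" and "r' = lswap i j r" using rows by blast
    then have "lswap i j r' = r" using lswap_lswap[of i r j] length_row_in_M[OF M r] i j by simp
    then show "lswap i j r' \<in> rows T" using r by simp
  qed
  show "lswap i j [0..<length (attrs T)] \<noteq> []"
    using i by (simp add: lswap_def) (metis length_0_conv less_nat_zero_code)
  show "set (lswap i j [0..<length (attrs T)]) \<subseteq> {..<length (attrs T)}"
    using set_lswap_upt[OF i j] .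
  show "attrs T' = map ((!) (attrs T)) (lswap i j [0..<length (attrs T)])"
    using attrs i j lswap_conv_map_nth[of i "attrs T" j] by simp
  show "rows T' = (\<lambda>r. map ((!) r) (lswap i j [0..<length (attrs T)])) ` rows T"
    unfolding rows
  proof (rule image_cong[OF refl])
    fix r assume "r \<in> rows T"
    then show "lswap i j r = map ((!) r) (lswap i j [0..<length (attrs T)])"
      using lswap_conv_map_nth[of i r j] length_row_in_M[OF M] i j by simp
  qed
  show "\<forall>r\<in>rows T'. dec T' r \<noteq> {} \<and> finite (dec T' r)"
    using dec_in_M(1)[OF M] swapped_in_rows unfolding dec by blast
  show "\<forall>r. r \<notin> rows T' \<longrightarrow> dec T' r = {}"
    using dec_in_M(2)[OF M] swapped_in_rows unfolding dec by blast
qed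

lemma in_M_duplicate_column:
  assumes M: "in_M k F T" and i: "i < length (attrs T)"
    and attrs: "attrs T' = ldup i (attrs T)" and rows: "rows T' = ldup i ` rows T"
    and dec: "\<forall>r\<in>rows T. dec T' (ldup i r) = dec T r" "\<forall>r'. r' \<notin> rows T' \<longrightarrow> dec T' r' = {}"
  shows "in_M k F T'"
proof (rule in_M_reindex[OF M, of "ldup i [0..<length (attrs T)]"])
  show "ldup i [0..<length (attrs T)] \<noteq> []" "set (ldup i [0..<length (attrs T)]) \<subseteq> {..<length (attrs T)}"
    using i by (auto simp: ldup_def dest: in_set_takeD in_set_dropD)
  show "attrs T' = map ((!) (attrs T)) (ldup i [0..<length (attrs T)])"
    using attrs i ldup_conv_map_nth[of i "attrs T"] by simp
  show "rows T' = (\<lambda>r. map ((!) r) (ldup i [0..<length (attrs T)])) ` rows T"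
    unfolding rows
  proof (rule image_cong[OF refl])
    fix r assume "r \<in> rows T"
    then show "ldup i r = map ((!) r) (ldup i [0..<length (attrs T)])"
      using ldup_conv_map_nth[of i r] length_row_in_M[OF M] i by simp
  qed
  show "\<forall>r'\<in>rows T'. dec T' r' \<noteq> {} \<and> finite (dec T' r')"
    using dec(1) dec_in_M(1)[OF M] unfolding rows by auto
qed (use dec(2) in blast)

lemma table_op_in_M:
  assumes "table_op T T'" and M: "in_M k F T"
  shows "in_M k F T'"
  using assms(1) unfolding table_op_def
proof (elim disjE exE conjE)
  assume "attrs T' = attrs T" "rows T' = rows T"
    "\<forall>r\<in>rows T'. dec T' r \<noteq> {} \<and> finite (dec T' r)" "\<forall>r. r \<notin> rows T' \<longrightarrow> dec T' r = {}"
  then show ?thesis using M unfolding in_M_def by (simp only:) blast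
qed (fact in_M_remove_column[OF M] in_M_swap_columns[OF M] in_M_duplicate_column[OF M])+

lemma closed_class_in_M: "closed_class k F {T. in_M k F T}"
  unfolding closed_class_def
proof (intro conjI ballI allI impI)
  fix T T' assume "T \<in> {T. in_M k F T}" and "table_op\<^sup>*\<^sup>* T T'"
  from this(2,1) show "T' \<in> {T. in_M k F T}"
    by (induction rule: rtranclp_induct) (auto dest: table_op_in_M)
qed simp

lemma closed_class_UN:
  assumes closed: "\<And>m. m \<in> S \<Longrightarrow> closed_class k (F m) (C m)"
    and sub: "\<And>m. m \<in> S \<Longrightarrow> F m \<subseteq> G"
  shows "closed_class k G (\<Union>m\<in>S. C m)"
  unfolding closed_class_def
proof (intro conjI subsetI ballI allI impI)
  fix T assume "T \<in> (\<Union>m\<in>S. C m)"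
  then obtain m where m: "m \<in> S" "T \<in> C m" by blast
  then have "in_M k (F m) T" using closed unfolding closed_class_def by blast
  then show "T \<in> {T. in_M k G T}" using in_M_mono sub m(1) by blast
next
  fix T T' assume "T \<in> (\<Union>m\<in>S. C m)" and st: "table_op\<^sup>*\<^sup>* T T'"
  then obtain m where m: "m \<in> S" "T \<in> C m" by blast
  then have "T' \<in> C m" using closed st unfolding closed_class_def by blast
  then show "T' \<in> (\<Union>m\<in>S. C m)" using m(1) by blast
qed

section \<open>Decision trees and the complexities of a table\<close>

lemma set_node_paths_Work:
  "set (node_paths (Work f es)) =
     (\<Union>e\<in>set es. (\<lambda>p. ((f, fst e) # fst p, snd p)) ` set (node_paths (snd e)))"
  by auto

lemma snd_in_snds: "snd e \<in> Basic_BNFs.snds e"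
  by (cases e) simp

lemma node_paths_nonempty: "wf_node k t \<Longrightarrow> node_paths t \<noteq> []"
proof (induction t)
  case (Work f es)
  from Work.prems obtain e where e: "e \<in> set es" and "wf_node k (snd e)"
    by (cases es) auto
  then have "node_paths (snd e) \<noteq> []" using Work.IH[OF e snd_in_snds] by blast
  then show ?case using e by (auto simp: concat_eq_Nil_conv)
qed simp

lemma node_paths_attrs: "p \<in> set (node_paths t) \<Longrightarrow> set (map fst (fst p)) \<subseteq> node_attrs t"
proof (induction t arbitrary: p)
  case (Work f es)
  then obtain e q where e: "e \<in> set es" and q: "q \<in> set (node_paths (snd e))"
    and p: "p = ((f, fst e) # fst q, snd q)" unfolding set_node_paths_Work by blast
  have "set (map fst (fst q)) \<subseteq> node_attrs (snd e)" using Work.IH[OF e snd_in_snds q] .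
  then show ?case using p e by auto
qed simp

lemma tree_paths_nonempty: "wf_tree k \<Gamma> \<Longrightarrow> set (tree_paths \<Gamma>) \<noteq> {}"
  unfolding wf_tree_def tree_paths_def using node_paths_nonempty
  by (fastforce simp: neq_Nil_conv)

lemma tree_paths_attrs: "\<xi> \<in> set (tree_paths \<Gamma>) \<Longrightarrow> set (map fst (fst \<xi>)) \<subseteq> tree_attrs \<Gamma>"
  unfolding tree_paths_def tree_attrs_def using node_paths_attrs by fastforce

lemma tree_cost_ge: "\<xi> \<in> set (tree_paths \<Gamma>) \<Longrightarrow> \<psi> (map fst (fst \<xi>)) \<le> tree_cost \<psi> \<Gamma>"
  unfolding tree_cost_def by simp

lemma sub_rows_Nil: "sub_rows T [] = rows T"
  unfolding sub_rows_def by simp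

lemma sub_rows_subset: "sub_rows T \<alpha> \<subseteq> rows T"
  unfolding sub_rows_def by blast

fun query_all :: "nat \<Rightarrow> 'f list \<Rightarrow> (nat list \<Rightarrow> nat) \<Rightarrow> 'f dnode" where
  "query_all k [] lab = Term (lab [])"
| "query_all k (f # fs) lab = Work f (map (\<lambda>v. (v, query_all k fs (\<lambda>ws. lab (v # ws)))) [0..<k])"

lemma set_node_paths_query_all:
  "set (node_paths (query_all k fs lab)) =
     {(zip fs ws, lab ws) | ws. length ws = length fs \<and> set ws \<subseteq> {..<k}}"
proof (induction fs arbitrary: lab)
  case (Cons f fs)
  have "set (node_paths (query_all k (f # fs) lab)) =
    (\<Union>v<k. (\<lambda>p. ((f, v) # fst p, snd p)) `
       {(zip fs ws, lab (v # ws)) | ws. length ws = length fs \<and> set ws \<subseteq> {..<k}})"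
    unfolding query_all.simps set_node_paths_Work by (simp add: Cons.IH atLeast0LessThan)
  also have "\<dots> = {(zip (f # fs) ws, lab ws) | ws. length ws = length (f # fs) \<and> set ws \<subseteq> {..<k}}"
    (is "?L = ?R")
  proof (intro equalityI subsetI)
    fix x assume "x \<in> ?L"
    then obtain v ws where "x = (zip (f # fs) (v # ws), lab (v # ws))"
      and "v < k" "length ws = length fs" "set ws \<subseteq> {..<k}" by auto
    then show "x \<in> ?R" by (intro CollectI exI[of _ "v # ws"]) simp
  next
    fix x assume "x \<in> ?R"
    then obtain v ws where "x = (zip (f # fs) (v # ws), lab (v # ws))"
      and "v < k" "length ws = length fs" "set ws \<subseteq> {..<k}" by (auto simp: length_Suc_conv)
    then show "x \<in> ?L" by (auto intro!: bexI[of _ v] image_eqI[where x="(zip fs ws, lab (v # ws))"])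
  qed
  finally show ?case .
qed simp

lemma query_all_wf: "0 < k \<Longrightarrow> wf_node k (query_all k fs lab)"
  by (induction fs arbitrary: lab) auto

lemma query_all_det: "det_node (query_all k fs lab)"
  by (induction fs arbitrary: lab) (auto simp: distinct_map inj_on_def)

lemma query_all_attrs: "node_attrs (query_all k fs lab) \<subseteq> set fs"
  by (induction fs arbitrary: lab) auto

lemma sub_rowsD:
  "r \<in> sub_rows T \<alpha> \<Longrightarrow> p \<in> set \<alpha> \<Longrightarrow> i < length (attrs T) \<Longrightarrow> attrs T ! i = fst p \<Longrightarrow> r ! i = snd p"
  unfolding sub_rows_def by blast

lemma sub_rows_zip_attrs:
  assumes M: "in_M k F T" and ws: "length ws = length (attrs T)"
  shows "sub_rows T (zip (attrs T) ws) = rows T \<inter> {ws}"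
proof (intro equalityI subsetI)
  fix r assume r: "r \<in> sub_rows T (zip (attrs T) ws)"
  then have r_row: "r \<in> rows T" using sub_rows_subset by blast
  have "r = ws"
  proof (rule nth_equalityI)
    show "length r = length ws" using length_row_in_M[OF M r_row] ws by simp
    fix j assume "j < length r"
    then have j: "j < length (attrs T)" using length_row_in_M[OF M r_row] by simp
    then have "(attrs T ! j, ws ! j) \<in> set (zip (attrs T) ws)"
      using nth_mem[of j "zip (attrs T) ws"] ws by simp
    from sub_rowsD[OF r this j] show "r ! j = ws ! j" by simp
  qed
  then show "r \<in> rows T \<inter> {ws}" using r_row by simp
next
  fix r assume "r \<in> rows T \<inter> {ws}"
  then have r: "r \<in> rows T" and rws: "r = ws" by auto
  show "r \<in> sub_rows T (zip (attrs T) ws)"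
    unfolding sub_rows_def
  proof (intro CollectI conjI ballI allI impI)
    fix p i assume "p \<in> set (zip (attrs T) ws)" and i: "i < length (attrs T)" "attrs T ! i = fst p"
    then obtain j where "j < length (attrs T)" and "p = (attrs T ! j, ws ! j)"
      using ws by (auto simp: in_set_conv_nth)
    then show "r ! i = snd p" using row_consistent_in_M[OF M r i(1)] i(2) rws by simp
  qed (rule r)
qed

lemma sub_rows_single_distinct:
  assumes "distinct (attrs T)" and "j < length (attrs T)"
  shows "sub_rows T [(attrs T ! j, v)] = {r \<in> rows T. r ! j = v}"
  unfolding sub_rows_def using nth_eq_iff_index_eq[OF assms(1) _ assms(2)] assms(2) by auto

lemma complete_tree:
  fixes \<psi> :: "'f list \<Rightarrow> nat"
  assumes M: "in_M k F T" and k: "0 < k"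
  defines "\<Gamma> \<equiv> [query_all k (attrs T) (\<lambda>ws. SOME c. c \<in> dec T ws)]"
  shows "dt_for k T \<Gamma>" and "tree_cost \<psi> \<Gamma> = \<psi> (attrs T)"
proof -
  let ?W = "{ws. length ws = length (attrs T) \<and> set ws \<subseteq> {..<k}}"
  have paths: "set (tree_paths \<Gamma>) = (\<lambda>ws. (zip (attrs T) ws, SOME c. c \<in> dec T ws)) ` ?W"
    unfolding \<Gamma>_def tree_paths_def by (auto simp: set_node_paths_query_all)
  have rows_W: "rows T \<subseteq> ?W"
    using length_row_in_M[OF M] row_values_in_M[OF M] by blast
  have "wf_tree k \<Gamma>" unfolding \<Gamma>_def wf_tree_def using query_all_wf[OF k] by simp
  moreover have "tree_attrs \<Gamma> \<subseteq> set (attrs T)"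
    unfolding \<Gamma>_def tree_attrs_def using query_all_attrs by simp
  moreover have "(\<Union>\<xi>\<in>set (tree_paths \<Gamma>). sub_rows T (fst \<xi>)) = rows T"
    unfolding paths using sub_rows_zip_attrs[OF M] rows_W by auto
  moreover have "\<forall>\<xi>\<in>set (tree_paths \<Gamma>). \<forall>r\<in>sub_rows T (fst \<xi>). snd \<xi> \<in> dec T r"
    unfolding paths using sub_rows_zip_attrs[OF M] dec_in_M(1)[OF M] by (auto simp: some_in_eq)
  moreover have "is_det_tree \<Gamma>" unfolding \<Gamma>_def is_det_tree_def using query_all_det by simp
  ultimately show "dt_for k T \<Gamma>" unfolding dt_for_def ndt_for_def by blast
  have "(\<lambda>\<xi>. \<psi> (map fst (fst \<xi>))) ` set (tree_paths \<Gamma>) = (\<lambda>_. \<psi> (attrs T)) ` set (tree_paths \<Gamma>)"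
    by (rule image_cong) (auto simp: paths)
  also have "\<dots> = {\<psi> (attrs T)}"
    using tree_paths_nonempty[OF \<open>wf_tree k \<Gamma>\<close>] by (simp add: image_constant_conv)
  finally show "tree_cost \<psi> \<Gamma> = \<psi> (attrs T)" unfolding tree_cost_def by simp
qed

lemma psi_d_le_tree_cost: "dt_for k T \<Gamma> \<Longrightarrow> psi_d k \<psi> T \<le> tree_cost \<psi> \<Gamma>"
  unfolding psi_d_def by (rule Least_le) blast

lemma psi_a_le_tree_cost: "ndt_for k T \<Gamma> \<Longrightarrow> psi_a k \<psi> T \<le> tree_cost \<psi> \<Gamma>"
  unfolding psi_a_def by (rule Least_le) blast

lemma psi_d_attained:
  assumes "in_M k F T" and "0 < k"
  obtains \<Gamma> where "dt_for k T \<Gamma>" and "tree_cost \<psi> \<Gamma> = psi_d k \<psi> T"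
proof -
  have "\<exists>\<Gamma>. dt_for k T \<Gamma> \<and> tree_cost \<psi> \<Gamma> = psi_d k \<psi> T"
    unfolding psi_d_def by (rule LeastI_ex) (use complete_tree[OF assms] in blast)
  then show ?thesis using that by blast
qed

lemma psi_a_le_psi_d:
  assumes "in_M k F T" and "0 < k"
  shows "psi_a k \<psi> T \<le> psi_d k \<psi> T"
proof -
  obtain \<Gamma> where "dt_for k T \<Gamma>" and "tree_cost \<psi> \<Gamma> = psi_d k \<psi> T"
    using psi_d_attained[OF assms] .
  then show ?thesis using psi_a_le_tree_cost[of k T \<Gamma> \<psi>] unfolding dt_for_def by simp
qed

lemma psi_a_attained:
  assumes "in_M k F T" and "0 < k"
  obtains \<Gamma> where "ndt_for k T \<Gamma>" and "tree_cost \<psi> \<Gamma> = psi_a k \<psi> T"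
proof -
  have "\<exists>\<Gamma>. ndt_for k T \<Gamma> \<and> tree_cost \<psi> \<Gamma> = psi_a k \<psi> T"
    unfolding psi_a_def by (rule LeastI_ex) (use complete_tree[OF assms] dt_for_def in blast)
  then show ?thesis using that by blast
qed

lemma psi_d_le_psi_i:
  assumes "in_M k F T" and "0 < k"
  shows "psi_d k \<psi> T \<le> psi_i \<psi> T"
  using psi_d_le_tree_cost[OF complete_tree(1)[OF assms]] complete_tree(2)[OF assms]
  unfolding psi_i_def by simp

lemma psi_m_mono:
  assumes "in_M k F T" and "0 < k" and "b = c \<or> b = A \<or> c = I"
  shows "psi_m b k \<psi> T \<le> psi_m c k \<psi> T"
  using psi_a_le_psi_d[OF assms(1,2), of \<psi>] psi_d_le_psi_i[OF assms(1,2), of \<psi>] assms(3)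
  by (cases b; cases c) simp_all

definition degenerate :: "'f dtable \<Rightarrow> bool" where
  "degenerate T \<longleftrightarrow> (\<exists>c. \<forall>r\<in>rows T. c \<in> dec T r)"

lemma degenerate_dt_for_Term:
  assumes "\<forall>r\<in>rows T. c \<in> dec T r"
  shows "dt_for k T [Term c]"
  using assms unfolding dt_for_def ndt_for_def is_det_tree_def wf_tree_def tree_attrs_def tree_paths_def
  by (simp add: sub_rows_Nil)

lemma psi_d_degenerate: "degenerate T \<Longrightarrow> psi_d k \<psi> T \<le> \<psi> []"
  unfolding degenerate_def
  using psi_d_le_tree_cost[OF degenerate_dt_for_Term] by (fastforce simp: tree_cost_def tree_paths_def)

lemma degenerate_if_Nil_path:
  assumes "ndt_for k T \<Gamma>" and "\<xi> \<in> set (tree_paths \<Gamma>)" and "fst \<xi> = []"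
  shows "degenerate T"
  using assms unfolding ndt_for_def degenerate_def by (metis sub_rows_Nil)

lemma det_tree_long_path:
  assumes dt: "dt_for k T \<Gamma>" and nondeg: "\<not> degenerate T"
    and indist: "\<And>x. x \<in> set (attrs T) \<Longrightarrow> \<exists>r1\<in>rows T. \<exists>r2\<in>rows T. dec T r1 \<inter> dec T r2 = {} \<and>
        (\<forall>i<length (attrs T). attrs T ! i = x \<longrightarrow> r1 ! i = r2 ! i)"
  obtains \<xi> where "\<xi> \<in> set (tree_paths \<Gamma>)" and "2 \<le> length (fst \<xi>)"
proof -
  have nd: "ndt_for k T \<Gamma>" and "is_det_tree \<Gamma>" using dt unfolding dt_for_def by blast+
  then obtain t where \<Gamma>: "\<Gamma> = [t]" unfolding is_det_tree_def by (auto simp: length_Suc_conv)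
  have paths: "set (tree_paths \<Gamma>) = set (node_paths t)" unfolding \<Gamma> tree_paths_def by simp
  show ?thesis
  proof (cases t)
    case (Term c)
    then have "([], c) \<in> set (tree_paths \<Gamma>)" unfolding paths by simp
    then show ?thesis using degenerate_if_Nil_path[OF nd] nondeg by fastforce
  next
    case (Work x es)
    then have "x \<in> tree_attrs \<Gamma>" unfolding \<Gamma> tree_attrs_def by simp
    then have "x \<in> set (attrs T)" using nd unfolding ndt_for_def by blast
    then obtain r1 r2 where r1: "r1 \<in> rows T" and r2: "r2 \<in> rows T"
      and disj: "dec T r1 \<inter> dec T r2 = {}"
      and agree: "\<forall>i<length (attrs T). attrs T ! i = x \<longrightarrow> r1 ! i = r2 ! i"
      using indist by blast
    obtain \<xi> where \<xi>: "\<xi> \<in> set (tree_paths \<Gamma>)" and r1\<xi>: "r1 \<in> sub_rows T (fst \<xi>)"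
      using nd r1 unfolding ndt_for_def by blast
    then obtain v \<beta> where \<xi>_eq: "fst \<xi> = (x, v) # \<beta>"
      unfolding paths Work set_node_paths_Work by auto
    have "\<beta> \<noteq> []"
    proof
      assume "\<beta> = []"
      then have "r2 \<in> sub_rows T (fst \<xi>)"
        using r1\<xi> r2 agree unfolding \<xi>_eq sub_rows_def by auto
      then have "snd \<xi> \<in> dec T r1 \<inter> dec T r2"
        using nd \<xi> r1\<xi> unfolding ndt_for_def by blast
      then show False using disj by blast
    qed
    then have "2 \<le> length (fst \<xi>)" using \<xi>_eq by (cases \<beta>) auto
    then show ?thesis using that \<xi> by blast
  qed
qed

section \<open>Tables within one block of attributes\<close>

definition block :: "nat \<Rightarrow> nat set" where
  "block m = {f. f div 3 = m}"

fun block_psi :: "nat list \<Rightarrow> nat" where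
  "block_psi [] = 0"
| "block_psi [f] = 2 * (f div 3) + 1"
| "block_psi (f # g # w) = 2 * (f div 3) + 4"

definition block_class :: "nat set \<Rightarrow> nat dtable set" where
  "block_class S = (\<Union>m\<in>S. {T. in_M 2 (block m) T})"

definition block_tpair :: "nat set \<Rightarrow> nat tpair" where
  "block_tpair S = \<lparr>tk = 2, tF = (\<Union>m\<in>S. block m), tC = block_class S, tpsi = block_psi\<rparr>"

lemma block_tpair_simps [simp]:
  "tk (block_tpair S) = 2" "tF (block_tpair S) = (\<Union>m\<in>S. block m)"
  "tC (block_tpair S) = block_class S" "tpsi (block_tpair S) = block_psi"
  by (simp_all add: block_tpair_def)

lemma block_class_in_M: "T \<in> block_class S \<Longrightarrow> \<exists>m\<in>S. in_M 2 (block m) T"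
  unfolding block_class_def by blast

lemma block_class_memI: "m \<in> S \<Longrightarrow> in_M 2 (block m) T \<Longrightarrow> T \<in> block_class S"
  unfolding block_class_def by blast

lemma block_class_Un: "block_class (S1 \<union> S2) = block_class S1 \<union> block_class S2"
  unfolding block_class_def by (rule UN_Un)

lemma block_psi_bounds:
  assumes "w \<noteq> []" and "set w \<subseteq> block m"
  shows "2 * m + 1 \<le> block_psi w" and "block_psi w \<le> 2 * m + 4"
  using assms by (cases w rule: block_psi.cases; simp add: block_def)+

lemma block_psi_long: "2 \<le> length w \<Longrightarrow> set w \<subseteq> block m \<Longrightarrow> block_psi w = 2 * m + 4"
  by (cases w rule: block_psi.cases) (auto simp: block_def)

lemma psi_i_block_bounds:
  assumes "in_M 2 (block m) T"
  shows "2 * m + 1 \<le> psi_i block_psi T" and "psi_i block_psi T \<le> 2 * m + 4"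
proof -
  have "attrs T \<noteq> []" and "set (attrs T) \<subseteq> block m"
    using attrs_in_M[OF assms] by auto
  then show "2 * m + 1 \<le> psi_i block_psi T" and "psi_i block_psi T \<le> 2 * m + 4"
    unfolding psi_i_def by (rule block_psi_bounds)+
qed

lemma psi_a_block_nondegenerate:
  assumes M: "in_M 2 (block m) T" and nondeg: "\<not> degenerate T"
  shows "2 * m + 1 \<le> psi_a 2 block_psi T"
proof -
  obtain \<Gamma> where nd: "ndt_for 2 T \<Gamma>" and cost: "tree_cost block_psi \<Gamma> = psi_a 2 block_psi T"
    by (rule psi_a_attained[OF M zero_less_numeral])
  have wf: "wf_tree 2 \<Gamma>" and attrs: "tree_attrs \<Gamma> \<subseteq> set (attrs T)"
    using nd by (simp_all add: ndt_for_def)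
  obtain \<xi> where \<xi>: "\<xi> \<in> set (tree_paths \<Gamma>)"
    using tree_paths_nonempty[OF wf] by (meson ex_in_conv)
  have "fst \<xi> \<noteq> []" using degenerate_if_Nil_path[OF nd \<xi>] nondeg by blast
  moreover have "set (map fst (fst \<xi>)) \<subseteq> block m"
    using tree_paths_attrs[OF \<xi>] attrs attrs_in_M[OF M] by blast
  ultimately have "2 * m + 1 \<le> block_psi (map fst (fst \<xi>))"
    by (intro block_psi_bounds) simp_all
  also have "\<dots> \<le> psi_a 2 block_psi T" using tree_cost_ge[OF \<xi>, of block_psi] cost by simp
  finally show ?thesis .
qed

lemma psi_d_block_degenerate: "degenerate T \<Longrightarrow> psi_d k block_psi T = 0"
  using psi_d_degenerate[of T k block_psi] by simp

lemma block_class_psi_d_cases: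
  assumes "T \<in> block_class S"
  shows "psi_d 2 block_psi T = 0 \<or>
    (\<exists>m\<in>S. 2 * m + 1 \<le> psi_a 2 block_psi T \<and> psi_d 2 block_psi T \<le> 2 * m + 4)"
proof (cases "degenerate T")
  case False
  from assms obtain m where m: "m \<in> S" and M: "in_M 2 (block m) T"
    unfolding block_class_def by blast
  have "psi_d 2 block_psi T \<le> 2 * m + 4"
    using psi_d_le_psi_i[OF M, of block_psi] psi_i_block_bounds(2)[OF M] by simp
  then show ?thesis using psi_a_block_nondegenerate[OF M False] m by blast
qed (simp add: psi_d_block_degenerate)

definition bit_table :: "nat \<Rightarrow> nat dtable" where
  "bit_table m = \<lparr>attrs = [3 * m], rows = {[0], [1]},
     dec = (\<lambda>r. if r = [0] then {0} else if r = [1] then {1} else {})\<rparr>"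

definition one_row_table :: "nat \<Rightarrow> nat dtable" where
  "one_row_table m = \<lparr>attrs = [3 * m], rows = {[0]}, dec = (\<lambda>r. if r = [0] then {0} else {})\<rparr>"

definition unit_vector_table :: "nat \<Rightarrow> nat dtable" where
  "unit_vector_table m = \<lparr>attrs = [3 * m, 3 * m + 1, 3 * m + 2],
     rows = {[1, 0, 0], [0, 1, 0], [0, 0, 1]},
     dec = (\<lambda>r. if r = [1, 0, 0] then {0} else if r = [0, 1, 0] then {1}
                else if r = [0, 0, 1] then {2} else {})\<rparr>"

lemma bit_table_in_M: "in_M 2 (block m) (bit_table m)"
  by (rule in_M_distinct_attrsI) (auto simp: bit_table_def block_def)

lemma one_row_table_in_M: "in_M 2 (block m) (one_row_table m)"
  by (rule in_M_distinct_attrsI) (auto simp: one_row_table_def block_def)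

lemma unit_vector_table_in_M: "in_M 2 (block m) (unit_vector_table m)"
  by (rule in_M_distinct_attrsI) (auto simp: unit_vector_table_def block_def)

lemma bit_table_psi:
  shows "psi_i block_psi (bit_table m) = 2 * m + 1"
    and "psi_d 2 block_psi (bit_table m) = 2 * m + 1"
    and "psi_a 2 block_psi (bit_table m) = 2 * m + 1"
proof -
  have "\<not> degenerate (bit_table m)" by (auto simp: degenerate_def bit_table_def)
  then have "2 * m + 1 \<le> psi_a 2 block_psi (bit_table m)"
    using psi_a_block_nondegenerate[OF bit_table_in_M[of m]] by blast
  moreover show i: "psi_i block_psi (bit_table m) = 2 * m + 1"
    by (simp add: psi_i_def bit_table_def)
  moreover note psi_a_le_psi_d[OF bit_table_in_M[of m], of block_psi]
    and psi_d_le_psi_i[OF bit_table_in_M[of m], of block_psi]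
  ultimately show "psi_d 2 block_psi (bit_table m) = 2 * m + 1"
    and "psi_a 2 block_psi (bit_table m) = 2 * m + 1"
    by simp_all
qed

lemma one_row_table_psi:
  shows "psi_i block_psi (one_row_table m) = 2 * m + 1"
    and "psi_d 2 block_psi (one_row_table m) = 0"
    and "psi_a 2 block_psi (one_row_table m) = 0"
proof -
  show "psi_i block_psi (one_row_table m) = 2 * m + 1"
    by (simp add: psi_i_def one_row_table_def)
  have "degenerate (one_row_table m)" by (auto simp: degenerate_def one_row_table_def)
  then show d: "psi_d 2 block_psi (one_row_table m) = 0" by (rule psi_d_block_degenerate)
  show "psi_a 2 block_psi (one_row_table m) = 0"
    using psi_a_le_psi_d[OF one_row_table_in_M[of m], of block_psi] d by simp
qed

lemma unit_vector_table_psi_a: "psi_a 2 block_psi (unit_vector_table m) \<le> 2 * m + 1"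
proof -
  let ?T = "unit_vector_table m"
  \<comment> \<open>the root guesses which coordinate of the row is \<open>1\<close> and checks it with one query\<close>
  let ?\<Gamma> = "[Work (3 * m) [(1, Term 0)], Work (3 * m + 1) [(1, Term 1)], Work (3 * m + 2) [(1, Term 2)]]"
  have paths: "set (tree_paths ?\<Gamma>) = {([(3 * m, 1)], 0), ([(3 * m + 1, 1)], 1), ([(3 * m + 2, 1)], 2)}"
    by (simp add: tree_paths_def)
  have "sub_rows ?T [(attrs ?T ! 0, 1)] = {[1, 0, 0]}"
    and "sub_rows ?T [(attrs ?T ! 1, 1)] = {[0, 1, 0]}"
    and "sub_rows ?T [(attrs ?T ! 2, 1)] = {[0, 0, 1]}"
    by (subst sub_rows_single_distinct; auto simp: unit_vector_table_def)+
  then have sub: "sub_rows ?T [(3 * m, 1)] = {[1, 0, 0]}"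
    "sub_rows ?T [(3 * m + 1, 1)] = {[0, 1, 0]}"
    "sub_rows ?T [(3 * m + 2, 1)] = {[0, 0, 1]}"
    by (simp_all add: unit_vector_table_def)
  have "ndt_for 2 ?T ?\<Gamma>"
    unfolding ndt_for_def
  proof (intro conjI)
    show "wf_tree 2 ?\<Gamma>" by (simp add: wf_tree_def)
    show "tree_attrs ?\<Gamma> \<subseteq> set (attrs ?T)" by (simp add: tree_attrs_def unit_vector_table_def)
    show "(\<Union>\<xi>\<in>set (tree_paths ?\<Gamma>). sub_rows ?T (fst \<xi>)) = rows ?T"
      unfolding paths using sub by (simp add: unit_vector_table_def insert_commute)
    show "\<forall>\<xi>\<in>set (tree_paths ?\<Gamma>). \<forall>r\<in>sub_rows ?T (fst \<xi>). snd \<xi> \<in> dec ?T r"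
      unfolding paths using sub by (simp add: unit_vector_table_def)
  qed
  moreover have "tree_cost block_psi ?\<Gamma> = 2 * m + 1"
    by (simp add: tree_cost_def tree_paths_def)
  ultimately show ?thesis using psi_a_le_tree_cost by metis
qed

lemma unit_vector_table_psi_d: "2 * m + 4 \<le> psi_d 2 block_psi (unit_vector_table m)"
proof -
  let ?T = "unit_vector_table m"
  obtain \<Gamma> where dt: "dt_for 2 ?T \<Gamma>" and cost: "tree_cost block_psi \<Gamma> = psi_d 2 block_psi ?T"
    by (rule psi_d_attained[OF unit_vector_table_in_M zero_less_numeral])
  have nondeg: "\<not> degenerate ?T" by (auto simp: degenerate_def unit_vector_table_def)
  have indist: "\<exists>r1\<in>rows ?T. \<exists>r2\<in>rows ?T. dec ?T r1 \<inter> dec ?T r2 = {} \<and>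
      (\<forall>i<length (attrs ?T). attrs ?T ! i = x \<longrightarrow> r1 ! i = r2 ! i)" if "x \<in> set (attrs ?T)" for x
  proof -
    have "x = 3 * m \<or> x = 3 * m + 1 \<or> x = 3 * m + 2" using that by (simp add: unit_vector_table_def)
    then show ?thesis
    proof (elim disjE)
      assume "x = 3 * m"
      then show ?thesis
        by (intro bexI[of _ "[0, 1, 0]"] bexI[of _ "[0, 0, 1]"])
          (auto simp: unit_vector_table_def less_Suc_eq numeral_3_eq_3)
    next
      assume "x = 3 * m + 1"
      then show ?thesis
        by (intro bexI[of _ "[1, 0, 0]"] bexI[of _ "[0, 0, 1]"])
          (auto simp: unit_vector_table_def less_Suc_eq numeral_3_eq_3)
    next
      assume "x = 3 * m + 2"
      then show ?thesis
        by (intro bexI[of _ "[1, 0, 0]"] bexI[of _ "[0, 1, 0]"])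
          (auto simp: unit_vector_table_def less_Suc_eq numeral_3_eq_3)
    qed
  qed
  obtain \<xi> where \<xi>: "\<xi> \<in> set (tree_paths \<Gamma>)" and long: "2 \<le> length (fst \<xi>)"
    using det_tree_long_path[OF dt nondeg indist] by blast
  have "tree_attrs \<Gamma> \<subseteq> set (attrs ?T)" using dt by (simp add: dt_for_def ndt_for_def)
  then have "set (map fst (fst \<xi>)) \<subseteq> block m"
    using tree_paths_attrs[OF \<xi>] attrs_in_M[OF unit_vector_table_in_M] by blast
  then have "block_psi (map fst (fst \<xi>)) = 2 * m + 4" using long by (intro block_psi_long) simp_all
  then show ?thesis using tree_cost_ge[OF \<xi>, of block_psi] cost by simp
qed

section \<open>Upper types of the block t-pairs\<close>

lemma infinite_image_affine: "infinite (S :: nat set) \<Longrightarrow> 0 < a \<Longrightarrow> infinite ((\<lambda>m. a * m + b) ` S)"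
  using finite_imageD[of "\<lambda>m. a * m + b" S] by (auto simp: inj_on_def)

lemma U_fun_eq_Some_iff:
  "U_fun \<tau> b c n = Some v \<longleftrightarrow>
     (\<exists>T\<in>tC \<tau>. psi_m c (tk \<tau>) (tpsi \<tau>) T \<le> n \<and> psi_m b (tk \<tau>) (tpsi \<tau>) T = v) \<and>
     (\<forall>T\<in>tC \<tau>. psi_m c (tk \<tau>) (tpsi \<tau>) T \<le> n \<longrightarrow> psi_m b (tk \<tau>) (tpsi \<tau>) T \<le> v)"
proof -
  define X where "X = {psi_m b (tk \<tau>) (tpsi \<tau>) T | T. T \<in> tC \<tau> \<and> psi_m c (tk \<tau>) (tpsi \<tau>) T \<le> n}"
  have U: "U_fun \<tau> b c n = (if X \<noteq> {} \<and> finite X then Some (Max X) else None)"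
    by (simp only: U_fun_def Let_def X_def)
  have "U_fun \<tau> b c n = Some v \<longleftrightarrow> v \<in> X \<and> (\<forall>x\<in>X. x \<le> v)"
  proof
    assume "U_fun \<tau> b c n = Some v"
    then have "X \<noteq> {}" and "finite X" and "v = Max X" unfolding U by (simp_all split: if_splits)
    then show "v \<in> X \<and> (\<forall>x\<in>X. x \<le> v)" by simp
  next
    assume v: "v \<in> X \<and> (\<forall>x\<in>X. x \<le> v)"
    then have "finite X" by (meson atMost_iff finite_atMost finite_subset subsetI)
    with v show "U_fun \<tau> b c n = Some v" unfolding U by (auto intro: Max_eqI)
  qed
  also have "\<dots> \<longleftrightarrow>
     (\<exists>T\<in>tC \<tau>. psi_m c (tk \<tau>) (tpsi \<tau>) T \<le> n \<and> psi_m b (tk \<tau>) (tpsi \<tau>) T = v) \<and>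
     (\<forall>T\<in>tC \<tau>. psi_m c (tk \<tau>) (tpsi \<tau>) T \<le> n \<longrightarrow> psi_m b (tk \<tau>) (tpsi \<tau>) T \<le> v)"
    unfolding X_def by blast
  finally show ?thesis .
qed

lemma U_fun_defined:
  assumes "W \<in> tC \<tau>" and "psi_m c (tk \<tau>) (tpsi \<tau>) W \<le> n"
    and "\<forall>T\<in>tC \<tau>. psi_m c (tk \<tau>) (tpsi \<tau>) T \<le> n \<longrightarrow> psi_m b (tk \<tau>) (tpsi \<tau>) T \<le> B"
  shows "\<exists>v. U_fun \<tau> b c n = Some v"
proof -
  define X where "X = {psi_m b (tk \<tau>) (tpsi \<tau>) T | T. T \<in> tC \<tau> \<and> psi_m c (tk \<tau>) (tpsi \<tau>) T \<le> n}"
  have "X \<noteq> {}" using assms(1,2) unfolding X_def by blast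
  moreover have "finite X" using assms(3) finite_subset[of X "{..B}"] unfolding X_def by blast
  ultimately show ?thesis unfolding U_fun_def X_def[symmetric] by simp
qed

lemma U_fun_eq_None:
  "infinite {psi_m b (tk \<tau>) (tpsi \<tau>) T | T. T \<in> tC \<tau> \<and> psi_m c (tk \<tau>) (tpsi \<tau>) T \<le> n} \<Longrightarrow>
     U_fun \<tau> b c n = None"
  unfolding U_fun_def by (simp add: Let_def)

lemma has_typ_GammaI:
  assumes "infinite {n. \<exists>v. g n = Some v \<and> n \<le> v}" and "infinite {n. \<exists>v. g n = Some v \<and> v \<le> n}"
  shows "has_typ g Gamma"
proof -
  have "pdom_plus g = {n. \<exists>v. g n = Some v \<and> n \<le> v}" "pdom_minus g = {n. \<exists>v. g n = Some v \<and> v \<le> n}"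
    unfolding pdom_plus_def pdom_minus_def pdom_def by auto
  then show ?thesis using assms by simp
qed

lemma U_block_diagonal:
  assumes m: "m \<in> S" and bc: "b = c \<or> b = A \<or> c = I"
  shows "U_fun (block_tpair S) b c (2 * m + 1) = Some (2 * m + 1)"
proof -
  have bit: "psi_m x 2 block_psi (bit_table m) = 2 * m + 1" for x
    by (cases x) (simp_all add: bit_table_psi)
  have bound: "psi_m b 2 block_psi T \<le> 2 * m + 1"
    if T: "T \<in> block_class S" and c: "psi_m c 2 block_psi T \<le> 2 * m + 1" for T
  proof -
    obtain m' where "in_M 2 (block m') T" using block_class_in_M[OF T] by blast
    then have "psi_m b 2 block_psi T \<le> psi_m c 2 block_psi T"
      by (rule psi_m_mono[OF _ zero_less_numeral bc])
    with c show ?thesis by simp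
  qed
  have "\<exists>T\<in>block_class S. psi_m c 2 block_psi T \<le> 2 * m + 1 \<and> psi_m b 2 block_psi T = 2 * m + 1"
    using bit block_class_memI[OF m bit_table_in_M] by (intro bexI[of _ "bit_table m"]) simp_all
  with bound show ?thesis
    unfolding U_fun_eq_Some_iff block_tpair_simps by blast
qed

lemma U_block_I_undefined:
  assumes S: "infinite S" and c: "c \<noteq> I"
  shows "U_fun (block_tpair S) I c n = None"
proof (rule U_fun_eq_None)
  let ?X = "{psi_m I (tk (block_tpair S)) (tpsi (block_tpair S)) T | T.
         T \<in> tC (block_tpair S) \<and> psi_m c (tk (block_tpair S)) (tpsi (block_tpair S)) T \<le> n}"
  have "(\<lambda>m. 2 * m + 1) ` S \<subseteq> ?X"
  proof
    fix x assume "x \<in> (\<lambda>m. 2 * m + 1) ` S"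
    then obtain m where m: "m \<in> S" and x: "x = 2 * m + 1" by blast
    have "psi_m c 2 block_psi (one_row_table m) = 0"
      using c by (cases c) (simp_all add: one_row_table_psi)
    then show "x \<in> ?X"
      using block_class_memI[OF m one_row_table_in_M] one_row_table_psi(1) x
      by (intro CollectI exI[of _ "one_row_table m"]) simp
  qed
  then show "infinite ?X"
    by (rule infinite_super) (rule infinite_image_affine[OF S], simp)
qed

lemma U_block_DA_defined:
  assumes "S \<noteq> {}"
  shows "\<exists>v. U_fun (block_tpair S) D A n = Some v"
proof -
  obtain m where m: "m \<in> S" using assms by blast
  have "psi_d 2 block_psi T \<le> n + 3"
    if "T \<in> block_class S" and "psi_a 2 block_psi T \<le> n" for T
    using block_class_psi_d_cases[OF that(1)] that(2) by auto
  then show ?thesis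
    using block_class_memI[OF m one_row_table_in_M] one_row_table_psi(3)
    by (intro U_fun_defined[where W = "one_row_table m" and B = "n + 3"]) simp_all
qed

lemma U_block_DA_above:
  assumes m: "m \<in> S" and n: "2 * m + 1 \<le> n" "n \<le> 2 * m + 3"
  shows "\<exists>v. U_fun (block_tpair S) D A n = Some v \<and> n < v"
proof -
  obtain v where v: "U_fun (block_tpair S) D A n = Some v"
    using U_block_DA_defined m by blast
  have "psi_d 2 block_psi (unit_vector_table m) \<le> v"
    using v block_class_memI[OF m unit_vector_table_in_M] unit_vector_table_psi_a[of m] n(1)
    unfolding U_fun_eq_Some_iff by simp
  then show ?thesis using v unit_vector_table_psi_d[of m] n(2) by auto
qed

lemma U_block_DA_below:
  assumes "S \<noteq> {}" and gap: "\<forall>m\<in>S. \<not> (2 * m + 1 \<le> n \<and> n \<le> 2 * m + 3)"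
  shows "\<exists>v. U_fun (block_tpair S) D A n = Some v \<and> v \<le> n"
proof -
  obtain v where v: "U_fun (block_tpair S) D A n = Some v"
    using U_block_DA_defined assms(1) by blast
  then obtain T where T: "T \<in> block_class S" "psi_a 2 block_psi T \<le> n" "psi_d 2 block_psi T = v"
    unfolding U_fun_eq_Some_iff by auto
  have "v \<le> n" using block_class_psi_d_cases[OF T(1)] T(2,3) gap by force
  then show ?thesis using v by blast
qed

lemma U_block_diagonal_Gamma:
  assumes "infinite S" and "b = c \<or> b = A \<or> c = I"
  shows "has_typ (U_fun (block_tpair S) b c) Gamma"
proof -
  have "(\<lambda>m. 2 * m + 1) ` S \<subseteq> {n. U_fun (block_tpair S) b c n = Some n}"
    using U_block_diagonal[OF _ assms(2)] by blast
  then have fixed: "infinite {n. U_fun (block_tpair S) b c n = Some n}"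
    by (rule infinite_super) (rule infinite_image_affine[OF assms(1)], simp)
  show ?thesis
  proof (rule has_typ_GammaI)
    show "infinite {n. \<exists>v. U_fun (block_tpair S) b c n = Some v \<and> n \<le> v}"
      by (rule infinite_super[OF _ fixed]) auto
    show "infinite {n. \<exists>v. U_fun (block_tpair S) b c n = Some v \<and> v \<le> n}"
      by (rule infinite_super[OF _ fixed]) auto
  qed
qed

lemma U_block_I_Epsilon:
  assumes "infinite S" and "c \<noteq> I"
  shows "has_typ (U_fun (block_tpair S) I c) Epsilon"
  using U_block_I_undefined[OF assms] by (simp add: pdom_def)

lemma U_block_DA_Gamma:
  assumes S: "infinite S" and coS: "infinite (- S)"
  shows "has_typ (U_fun (block_tpair S) D A) Gamma"
proof (rule has_typ_GammaI)
  have "(\<lambda>m. 2 * m + 1) ` S \<subseteq> {n. \<exists>v. U_fun (block_tpair S) D A n = Some v \<and> n \<le> v}"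
  proof
    fix n assume "n \<in> (\<lambda>m. 2 * m + 1) ` S"
    then obtain m where "m \<in> S" and "n = 2 * m + 1" by blast
    then obtain v where "U_fun (block_tpair S) D A n = Some v" and "n < v"
      using U_block_DA_above[of m S n] by auto
    then show "n \<in> {n. \<exists>v. U_fun (block_tpair S) D A n = Some v \<and> n \<le> v}" by auto
  qed
  then show "infinite {n. \<exists>v. U_fun (block_tpair S) D A n = Some v \<and> n \<le> v}"
    by (rule infinite_super) (rule infinite_image_affine[OF S], simp)
  have "(\<lambda>m. 2 * m + 2) ` (- S) \<subseteq> {n. \<exists>v. U_fun (block_tpair S) D A n = Some v \<and> v \<le> n}"
  proof
    fix n assume "n \<in> (\<lambda>m. 2 * m + 2) ` (- S)"
    then obtain m0 where m0: "m0 \<notin> S" and n: "n = 2 * m0 + 2" by blast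
    have "m = m0" if "2 * m + 1 \<le> n" and "n \<le> 2 * m + 3" for m
      using that n by presburger
    then have "\<forall>m\<in>S. \<not> (2 * m + 1 \<le> n \<and> n \<le> 2 * m + 3)" using m0 by blast
    then show "n \<in> {n. \<exists>v. U_fun (block_tpair S) D A n = Some v \<and> v \<le> n}"
      using U_block_DA_below[of S n] S by auto
  qed
  then show "infinite {n. \<exists>v. U_fun (block_tpair S) D A n = Some v \<and> v \<le> n}"
    by (rule infinite_super) (rule infinite_image_affine[OF coS], simp)
qed

lemma U_block_UNIV_DA_Delta: "has_typ (U_fun (block_tpair UNIV) D A) Delta"
proof -
  have "pdom (U_fun (block_tpair UNIV) D A) = UNIV"
    using U_block_DA_defined[of UNIV] unfolding pdom_def by auto
  moreover have "pdom_minus (U_fun (block_tpair UNIV) D A) \<subseteq> {0}"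
  proof
    fix n assume n: "n \<in> pdom_minus (U_fun (block_tpair UNIV) D A)"
    show "n \<in> {0}"
    proof (rule ccontr)
      assume "n \<notin> {0}"
      then have "2 * ((n - 1) div 2) + 1 \<le> n" and "n \<le> 2 * ((n - 1) div 2) + 3" by auto
      then obtain v where "U_fun (block_tpair UNIV) D A n = Some v" and "n < v"
        using U_block_DA_above[of "(n - 1) div 2" UNIV n] by blast
      then show False using n unfolding pdom_minus_def by simp
    qed
  qed
  ultimately show ?thesis using finite_subset by auto
qed

lemma block_tpair_upper_type:
  assumes S: "infinite S"
    and DA: "has_typ (U_fun (block_tpair S) D A) (t D A)"
    and t: "\<And>b c. b = c \<or> b = A \<or> c = I \<Longrightarrow> t b c = Gamma" "\<And>c. c \<noteq> I \<Longrightarrow> t I c = Epsilon"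
  shows "upper_type_is (block_tpair S) t"
  unfolding upper_type_is_def
proof (intro allI)
  fix b c
  consider "b = c \<or> b = A \<or> c = I" | "b = D \<and> c = A" | "b = I \<and> c \<noteq> I"
    by (cases b; cases c) simp_all
  then show "has_typ (U_fun (block_tpair S) b c) (t b c)"
  proof cases
    case 1
    then show ?thesis using U_block_diagonal_Gamma[OF S 1] t(1)[OF 1] by simp
  next
    case 2
    then show ?thesis using DA by simp
  next
    case 3
    then show ?thesis using U_block_I_Epsilon[OF S] t(2) by auto
  qed
qed

lemma block_tpair_t5:
  assumes "infinite S" and "infinite (- S)"
  shows "upper_type_is (block_tpair S) t5"
proof (rule block_tpair_upper_type[OF assms(1)])
  show "has_typ (U_fun (block_tpair S) D A) (t5 D A)" using U_block_DA_Gamma[OF assms] by simp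
  show "t5 b c = Gamma" if "b = c \<or> b = A \<or> c = I" for b c using that by (cases b; cases c) auto
  show "t5 I c = Epsilon" if "c \<noteq> I" for c using that by (cases c) auto
qed

lemma block_tpair_UNIV_t6: "upper_type_is (block_tpair UNIV) t6"
proof (rule block_tpair_upper_type)
  show "has_typ (U_fun (block_tpair UNIV) D A) (t6 D A)" using U_block_UNIV_DA_Delta by simp
  show "t6 b c = Gamma" if "b = c \<or> b = A \<or> c = I" for b c using that by (cases b; cases c) auto
  show "t6 I c = Epsilon" if "c \<noteq> I" for c using that by (cases c) auto
qed simp

lemma is_tpair_block_tpair:
  assumes "S \<noteq> {}"
  shows "is_tpair (block_tpair S)"
proof -
  obtain m where "m \<in> S" using assms by blast
  then have "3 * m \<in> (\<Union>m\<in>S. block m)" by (auto simp: block_def)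
  moreover have "closed_class 2 (\<Union>m\<in>S. block m) (block_class S)"
    unfolding block_class_def by (rule closed_class_UN[OF closed_class_in_M]) auto
  ultimately show ?thesis unfolding is_tpair_def by auto
qed

lemma block_tpair_union:
  assumes "S1 \<inter> S2 = {}" and "S1 \<noteq> {}" and "S2 \<noteq> {}"
  shows "compatible (block_tpair S1) (block_tpair S2)"
    and "is_union (block_tpair S1) (block_tpair S2) (block_tpair (S1 \<union> S2))"
proof -
  show "compatible (block_tpair S1) (block_tpair S2)"
    using assms(1) unfolding compatible_def by (auto simp: block_def)
  show "is_union (block_tpair S1) (block_tpair S2) (block_tpair (S1 \<union> S2))"
    using is_tpair_block_tpair assms(2) unfolding is_union_def by (simp add: block_class_Un)
qed

lemma exists_union_block_tpairs:
  assumes S1: "infinite S1" and S2: "infinite S2" and disj: "S1 \<inter> S2 = {}"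
    and union: "upper_type_is (block_tpair (S1 \<union> S2)) t"
  shows "\<exists>\<tau>1 \<tau>2 \<tau> :: nat tpair.
    is_tpair \<tau>1 \<and> is_tpair \<tau>2 \<and> compatible \<tau>1 \<tau>2 \<and> is_union \<tau>1 \<tau>2 \<tau> \<and>
    upper_type_is \<tau>1 t5 \<and> upper_type_is \<tau>2 t5 \<and> upper_type_is \<tau> t"
proof (intro exI conjI)
  have "S1 \<noteq> {}" "S2 \<noteq> {}" using S1 S2 by auto
  then show "is_tpair (block_tpair S1)" "is_tpair (block_tpair S2)"
    "compatible (block_tpair S1) (block_tpair S2)"
    "is_union (block_tpair S1) (block_tpair S2) (block_tpair (S1 \<union> S2))"
    using is_tpair_block_tpair block_tpair_union disj by blast+
  have "S2 \<subseteq> - S1" and "S1 \<subseteq> - S2" using disj by auto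
  then have co1: "infinite (- S1)" and co2: "infinite (- S2)"
    using infinite_super S1 S2 by (metis, metis)
  show "upper_type_is (block_tpair S1) t5" by (rule block_tpair_t5[OF S1 co1])
  show "upper_type_is (block_tpair S2) t5" by (rule block_tpair_t5[OF S2 co2])
qed (rule union)

theorem proposition6:
  shows "(\<exists>\<tau>1 \<tau>2 \<tau> :: nat tpair.
            is_tpair \<tau>1 \<and> is_tpair \<tau>2 \<and> compatible \<tau>1 \<tau>2 \<and> is_union \<tau>1 \<tau>2 \<tau> \<and>
            upper_type_is \<tau>1 t5 \<and> upper_type_is \<tau>2 t5 \<and> upper_type_is \<tau> t5)
       \<and> (\<exists>\<tau>1 \<tau>2 \<tau> :: nat tpair.
            is_tpair \<tau>1 \<and> is_tpair \<tau>2 \<and> compatible \<tau>1 \<tau>2 \<and> is_union \<tau>1 \<tau>2 \<tau> \<and>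
            upper_type_is \<tau>1 t5 \<and> upper_type_is \<tau>2 t5 \<and> upper_type_is \<tau> t6)"
proof -
  define R where "R a b = range (\<lambda>m::nat. a * m + b)" for a b
  have R_inf: "infinite (R a b)" if "0 < a" for a b
    unfolding R_def by (rule infinite_image_affine[OF infinite_UNIV_nat that])
  have inf_a: "infinite (R 4 0)" "infinite (R 4 1)" "infinite (R 4 2)"
    and inf_b: "infinite (R 2 0)" "infinite (R 2 1)"
    using R_inf by simp_all
  have disj_a: "R 4 0 \<inter> R 4 1 = {}" and gap: "R 4 2 \<subseteq> - (R 4 0 \<union> R 4 1)"
    unfolding R_def by (auto, presburger+)
  have "upper_type_is (block_tpair (R 4 0 \<union> R 4 1)) t5"
    using inf_a(1) infinite_super[OF gap inf_a(3)] by (intro block_tpair_t5) simp_all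
  then have part_a: "\<exists>\<tau>1 \<tau>2 \<tau> :: nat tpair.
      is_tpair \<tau>1 \<and> is_tpair \<tau>2 \<and> compatible \<tau>1 \<tau>2 \<and> is_union \<tau>1 \<tau>2 \<tau> \<and>
      upper_type_is \<tau>1 t5 \<and> upper_type_is \<tau>2 t5 \<and> upper_type_is \<tau> t5"
    by (rule exists_union_block_tpairs[OF inf_a(1,2) disj_a])
  have disj_b: "R 2 0 \<inter> R 2 1 = {}" and cover: "R 2 0 \<union> R 2 1 = UNIV"
    unfolding R_def by (auto simp: image_iff; presburger)+
  have part_b: "\<exists>\<tau>1 \<tau>2 \<tau> :: nat tpair.
      is_tpair \<tau>1 \<and> is_tpair \<tau>2 \<and> compatible \<tau>1 \<tau>2 \<and> is_union \<tau>1 \<tau>2 \<tau> \<and>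
      upper_type_is \<tau>1 t5 \<and> upper_type_is \<tau>2 t5 \<and> upper_type_is \<tau> t6"
    using exists_union_block_tpairs[OF inf_b disj_b] block_tpair_UNIV_t6 cover by simp
  from part_a part_b show ?thesis ..
qed

end
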